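(* Let $\mathbf{K}$ be a field of characteristic different from $2$ and let $A$ be a (not necessarily associative) algebra over $\mathbf{K}$ satisfying, for all $a,b\in A$, the identities $\langle a,a,b\rangle=0$, $\langle a,b,a\rangle=0$ and $\langle a,b,ab\rangle=0$, where $\langle a,b,c\rangle=(ab)c-a(bc)+b(ac)$. Then for all $a,b,c,d\in A$: (a) $\langle a,b,c\rangle$ is skew-symmetric in $a,b,c$; (b) $\langle ab,c,d\rangle+\langle ba,c,d\rangle=0$.
   Context: The product in $A$ is an arbitrary bilinear multiplication; no associativity or commutativity is assumed. *)

theory Defs
  imports Complex_Main
begin

definition bilinear_product ::
  "('k::field \<Rightarrow> 'a::ab_group_add \<Rightarrow> 'a) \<Rightarrow> ('a \<Rightarrow> 'a \<Rightarrow> 'a) \<Rightarrow> bool" where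
  "bilinear_product scale mult \<longleftrightarrow>
     (\<forall>x y z. mult (x + y) z = mult x z + mult y z) \<and>
     (\<forall>x y z. mult x (y + z) = mult x y + mult x z) \<and>
     (\<forall>k x y. mult (scale k x) y = scale k (mult x y)) \<and>
     (\<forall>k x y. mult x (scale k y) = scale k (mult x y))"

definition tri :: "('a::ab_group_add \<Rightarrow> 'a \<Rightarrow> 'a) \<Rightarrow> 'a \<Rightarrow> 'a \<Rightarrow> 'a \<Rightarrow> 'a" where
  "tri mult a b c = mult (mult a b) c - mult a (mult b c) + mult b (mult a c)"

end

theory Submission
  imports Defs
begin

text \<open>Part (a) is polarization: \<langle>a,a,b\<rangle> = 0 and \<langle>a,b,a\<rangle> = 0 make the additive map
  \<langle>-,-,c\<rangle> resp. \<langle>-,b,-\<rangle> alternating, hence skew.  For (b), skew-symmetry in the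
  first two arguments says that \<langle>a,b,c\<rangle> + \<langle>b,a,c\<rangle> = (ab + ba)c vanishes, so s = ab + ba
  is a left annihilator, and every term of \<langle>s,c,d\<rangle> = (sc)d - s(cd) + c(sd) is zero.\<close>

lemma skew_if_alternating:
  fixes f :: "'a::ab_group_add \<Rightarrow> 'a \<Rightarrow> 'b::ab_group_add"
  assumes add_left: "\<And>x y z. f (x + y) z = f x z + f y z"
    and add_right: "\<And>x y z. f x (y + z) = f x y + f x z"
    and alternating: "\<And>x. f x x = 0"
  shows "f x y = - f y x"
proof -
  have "f (x + y) (x + y) = f x x + f x y + f y x + f y y"
    by (simp add: add_left add_right)
  then have "f x y + f y x = 0"
    by (simp add: alternating)
  then show ?thesis
    by (simp add: eq_neg_iff_add_eq_0)
qed

locale biadditive =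
  fixes mult :: "'a::ab_group_add \<Rightarrow> 'a \<Rightarrow> 'a"
  assumes add_left: "mult (x + y) z = mult x z + mult y z"
    and add_right: "mult x (y + z) = mult x y + mult x z"
begin

lemma zero_left [simp]: "mult 0 z = 0"
  using add_left [of 0 0 z] by simp

lemma zero_right [simp]: "mult z 0 = 0"
  using add_right [of z 0 0] by simp

lemma tri_add_1: "tri mult (x + y) b c = tri mult x b c + tri mult y b c"
  unfolding tri_def by (simp add: add_left add_right algebra_simps)

lemma tri_add_2: "tri mult a (x + y) c = tri mult a x c + tri mult a y c"
  unfolding tri_def by (simp add: add_left add_right algebra_simps)

lemma tri_add_3: "tri mult a b (x + y) = tri mult a b x + tri mult a b y"
  unfolding tri_def by (simp add: add_left add_right algebra_simps)

lemma tri_swap_sum: "tri mult a b c + tri mult b a c = mult (mult a b + mult b a) c"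
  unfolding tri_def by (simp add: add_left algebra_simps)

lemma tri_left_annihilator:
  assumes "\<And>x. mult s x = 0"
  shows "tri mult s c d = 0"
  unfolding tri_def by (simp add: assms)

end

theorem lemma2:
  fixes scale :: "'k::field \<Rightarrow> 'a::ab_group_add \<Rightarrow> 'a"
    and mult :: "'a \<Rightarrow> 'a \<Rightarrow> 'a"
  assumes "vector_space scale"
    and "(2::'k) \<noteq> 0"
    and "bilinear_product scale mult"
    and "\<And>a b. tri mult a a b = 0"
    and "\<And>a b. tri mult a b a = 0"
    and "\<And>a b. tri mult a b (mult a b) = 0"
  shows "(\<forall>a b c. tri mult a b c = - tri mult b a c \<and>
                  tri mult a b c = - tri mult a c b \<and>
                  tri mult a b c = - tri mult c b a)
       \<and> (\<forall>a b c d. tri mult (mult a b) c d + tri mult (mult b a) c d = 0)"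
proof -
  interpret biadditive mult
    using assms(3) by unfold_locales (simp_all add: bilinear_product_def)
  have skew_12: "tri mult a b c = - tri mult b a c" for a b c
    by (rule skew_if_alternating [where f = "\<lambda>a b. tri mult a b c"])
      (simp_all add: tri_add_1 tri_add_2 assms(4))
  have skew_13: "tri mult a b c = - tri mult c b a" for a b c
    by (rule skew_if_alternating [where f = "\<lambda>a c. tri mult a b c"])
      (simp_all add: tri_add_1 tri_add_3 assms(5))
  have skew_23: "tri mult a b c = - tri mult a c b" for a b c
    by (metis skew_12 skew_13 minus_minus)
  have "tri mult (mult a b) c d + tri mult (mult b a) c d = 0" for a b c d
  proof -
    have "mult (mult a b + mult b a) x = 0" for x
      using skew_12 [of a b x] by (simp flip: tri_swap_sum)
    then show ?thesis
      by (simp flip: tri_add_1 add: tri_left_annihilator)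
  qed
  with skew_12 skew_13 skew_23 show ?thesis
    by blast
qed

end
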